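(* Let $n\ge1$ and let $f$ be an automorphism of the additive group $\mathbb{Z}^n$. Then: 1. If $f$ has a cycle of length $k$ other than the zero cycle $\{0\}$, then $f$ has infinitely many cycles of length $k$. 2. If $f$ has a chain, then $f$ has infinitely many chains. 3. If each standard basis vector $e_i$ ($1\le i\le n$) lies in a cycle of $f$, then every element of $\mathbb{Z}^n$ lies in a cycle of $f$, i.e., $f$ has no chains.
   Context: For a bijection $f$ of a set $A$, a cycle is a finite sequence $a_1,\dots,a_m$ of distinct elements with $f(a_j)=a_{j+1}$ for $j<m$ and $f(a_m)=a_1$ (length $m$); a chain is a two-sided infinite sequence $\dots,a_{-1},a_0,a_1,\dots$ of distinct elements with $f(a_j)=a_{j+1}$ for all $j$. Every element lies in exactly one cycle or chain. For an automorphism of $\mathbb{Z}^n$, the zero cycle is the fixed point $0$. $e_i\in\mathbb{Z}^n$ has $1$ in coordinate $i$ and $0$ elsewhere. *)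

theory Defs
  imports "HOL-Analysis.Analysis"
begin

definition is_aut :: "(int ^ 'n \<Rightarrow> int ^ 'n) \<Rightarrow> bool" where
  "is_aut f \<longleftrightarrow> bij f \<and> (\<forall>x y. f (x + y) = f x + f y)"

definition in_cycle_len :: "('a \<Rightarrow> 'a) \<Rightarrow> nat \<Rightarrow> 'a \<Rightarrow> bool" where
  "in_cycle_len f k a \<longleftrightarrow> 0 < k \<and> (f ^^ k) a = a \<and> (\<forall>j. 0 < j \<and> j < k \<longrightarrow> (f ^^ j) a \<noteq> a)"

definition in_cycle :: "('a \<Rightarrow> 'a) \<Rightarrow> 'a \<Rightarrow> bool" where
  "in_cycle f a \<longleftrightarrow> (\<exists>k. in_cycle_len f k a)"

text \<open>The cycles of f of length k, each represented by its (finite) set of elements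
  {a, f a, ..., f^(k-1) a} (a cycle up to rotation is determined by this set).\<close>
definition cycles_len :: "('a \<Rightarrow> 'a) \<Rightarrow> nat \<Rightarrow> 'a set set" where
  "cycles_len f k = {{(f ^^ j) a | j. j < k} | a. in_cycle_len f k a}"

text \<open>The chain of a bijection f through a point a: {f^j a | j \<in> Z}.\<close>
definition chain_through :: "('a \<Rightarrow> 'a) \<Rightarrow> 'a \<Rightarrow> 'a set" where
  "chain_through f a = {(f ^^ j) a | j. True} \<union> {(inv f ^^ j) a | j. True}"

definition chains :: "('a \<Rightarrow> 'a) \<Rightarrow> 'a set set" where
  "chains f = {chain_through f a | a. \<not> in_cycle f a}"

end

theory Submission
  imports Defs
begin

text \<open>Multiplication by a nonzero integer c commutes with every power of f and is injective,
  so c a has exactly the periods of a. Hence the multiples of a nonzero point on a k-cycle fill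
  infinitely many k-cycles, each cycle being finite, and the multiples of a point on a chain lie on
  chains. These chains are pairwise different: the gcd of the coordinates is invariant under
  automorphisms, hence constant along a chain, and it is c times larger at c a.
  If every basis vector is periodic, some power of f fixes all of them and therefore,
  being additive, every vector.\<close>

(* Qualified because HOL-Analysis also has Measure_Space.additive. *)
lemma is_aut_iff_bij_additive: "is_aut f \<longleftrightarrow> bij f \<and> Modules.additive f"
  unfolding is_aut_def Modules.additive_def by simp

lemma additive_funpow:
  fixes f :: "'a::ab_group_add \<Rightarrow> 'a"
  shows "Modules.additive f \<Longrightarrow> Modules.additive (f ^^ j)"
  by (induction j) (auto simp: Modules.additive_def)

lemma additive_inv:
  fixes f :: "'a::ab_group_add \<Rightarrow> 'b::ab_group_add"
  assumes "bij f" "Modules.additive f"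
  shows "Modules.additive (inv f)"
proof
  fix x y
  have "f (inv f x + inv f y) = x + y"
    using assms by (simp add: additive.add bij_is_surj surj_f_inv_f)
  then show "inv f (x + y) = inv f x + inv f y"
    by (metis assms(1) bij_is_inj inv_f_f)
qed

lemma is_aut_funpow:
  fixes f :: "int ^ 'n \<Rightarrow> int ^ 'n"
  shows "is_aut f \<Longrightarrow> is_aut (f ^^ j)"
  by (simp add: is_aut_iff_bij_additive additive_funpow)

lemma is_aut_inv: "is_aut f \<Longrightarrow> is_aut (inv f)"
  by (simp add: is_aut_iff_bij_additive additive_inv bij_imp_bij_inv)

lemma additive_scalar_mult:
  fixes f :: "int ^ 'n \<Rightarrow> int ^ 'm"
  assumes "Modules.additive f"
  shows "f (c *s x) = c *s f x"
proof (induction c rule: int_induct[where k = 0])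
  case base
  show ?case using additive.zero[OF assms] by simp
next
  case (step1 c)
  have "f ((c + 1) *s x) = f (c *s x + x)" by (simp add: vector_sadd_rdistrib)
  then show ?case using step1 by (simp add: additive.add[OF assms] vector_sadd_rdistrib)
next
  case (step2 c)
  have "f ((c - 1) *s x) = f (c *s x - x)" by (simp add: vec_eq_iff algebra_simps)
  then show ?case using step2 by (simp add: additive.diff[OF assms] vec_eq_iff algebra_simps)
qed

lemma scalar_mult_left_cancel:
  fixes x y :: "'a::idom ^ 'n"
  shows "c \<noteq> 0 \<Longrightarrow> c *s x = c *s y \<longleftrightarrow> x = y"
  by (auto simp: vec_eq_iff)

lemma inj_scalar_mult_right:
  fixes x :: "'a::idom ^ 'n"
  assumes "x \<noteq> 0"
  shows "inj (\<lambda>c. c *s x)"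
proof (rule injI)
  fix c d assume "c *s x = d *s x"
  moreover obtain i where "x $ i \<noteq> 0" using assms by (auto simp: vec_eq_iff)
  ultimately show "c = d" by (metis mult_cancel_right vector_smult_component)
qed

lemma funpow_fixed_point: "f x = x \<Longrightarrow> (f ^^ n) x = x"
  by (induction n) simp_all

lemma funpow_mult_period: "(f ^^ k) x = x \<Longrightarrow> (f ^^ (k * q)) x = x"
  by (simp add: funpow_mult[symmetric] funpow_fixed_point)

lemma in_cycle_iff_periodic: "in_cycle f a \<longleftrightarrow> (\<exists>k>0. (f ^^ k) a = a)"
proof
  assume "\<exists>k>0. (f ^^ k) a = a"
  define k where "k = (LEAST k. 0 < k \<and> (f ^^ k) a = a)"
  have "0 < k \<and> (f ^^ k) a = a"
    unfolding k_def using \<open>\<exists>k>0. (f ^^ k) a = a\<close> by (rule LeastI_ex)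
  moreover have "\<forall>j. 0 < j \<and> j < k \<longrightarrow> (f ^^ j) a \<noteq> a"
    unfolding k_def using not_less_Least by blast
  ultimately show "in_cycle f a" unfolding in_cycle_def in_cycle_len_def by blast
qed (auto simp: in_cycle_def in_cycle_len_def)

lemma common_period:
  assumes "finite I" "\<forall>i\<in>I. in_cycle f (a i)"
  shows "\<exists>K>0. \<forall>i\<in>I. (f ^^ K) (a i) = a i"
  using assms
proof (induction I rule: finite_induct)
  case empty
  show ?case by (intro exI[of _ 1]) simp
next
  case (insert j I)
  then obtain K where K: "K > 0" "\<forall>i\<in>I. (f ^^ K) (a i) = a i" by auto
  obtain k where k: "k > 0" "(f ^^ k) (a j) = a j"
    using insert.prems by (auto simp: in_cycle_iff_periodic)
  have "(f ^^ (K * k)) (a i) = a i" if "i \<in> insert j I" for i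
    using that K(2) k(2) funpow_mult_period[of K f] funpow_mult_period[of k f]
    by (auto simp: mult.commute[of K])
  then show ?case using K(1) k(1) by (intro exI[of _ "K * k"]) simp
qed

lemma finite_mem_cycles_len: "C \<in> cycles_len f k \<Longrightarrow> finite C"
proof -
  assume "C \<in> cycles_len f k"
  then obtain a where "C = {(f ^^ j) a | j. j < k}"
    unfolding cycles_len_def by blast
  then have "C = (\<lambda>j. (f ^^ j) a) ` {..<k}" by auto
  then show "finite C" by simp
qed

lemma in_cycle_len_imp_mem_Union_cycles_len:
  assumes "in_cycle_len f k a"
  shows "a \<in> \<Union> (cycles_len f k)"
proof -
  have "{(f ^^ j) a | j. j < k} \<in> cycles_len f k"
    unfolding cycles_len_def using assms by blast
  moreover have "a \<in> {(f ^^ j) a | j. j < k}"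
  proof -
    have "a = (f ^^ 0) a \<and> 0 < k" using assms by (simp add: in_cycle_len_def)
    then show ?thesis by blast
  qed
  ultimately show ?thesis by (rule UnionI)
qed

lemma infinite_cycles_len:
  assumes "infinite {a. in_cycle_len f k a}"
  shows "infinite (cycles_len f k)"
proof
  assume "finite (cycles_len f k)"
  then have "finite (\<Union> (cycles_len f k))"
    using finite_mem_cycles_len by (rule finite_Union)
  moreover have "{a. in_cycle_len f k a} \<subseteq> \<Union> (cycles_len f k)"
    using in_cycle_len_imp_mem_Union_cycles_len by (intro subsetI) simp
  ultimately show False using assms by (metis finite_subset)
qed

lemma funpow_scalar_mult_eq_iff:
  fixes f :: "int ^ 'n \<Rightarrow> int ^ 'n"
  assumes "Modules.additive f" "c \<noteq> 0"
  shows "(f ^^ j) (c *s a) = c *s a \<longleftrightarrow> (f ^^ j) a = a"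
  using additive_scalar_mult[OF additive_funpow[OF assms(1)]] scalar_mult_left_cancel[OF assms(2)]
  by simp

lemma in_cycle_len_scalar_mult_iff:
  fixes f :: "int ^ 'n \<Rightarrow> int ^ 'n"
  assumes "Modules.additive f" "c \<noteq> 0"
  shows "in_cycle_len f k (c *s a) \<longleftrightarrow> in_cycle_len f k a"
  unfolding in_cycle_len_def funpow_scalar_mult_eq_iff[OF assms] ..

lemma in_cycle_scalar_mult_iff:
  fixes f :: "int ^ 'n \<Rightarrow> int ^ 'n"
  assumes "Modules.additive f" "c \<noteq> 0"
  shows "in_cycle f (c *s a) \<longleftrightarrow> in_cycle f a"
  unfolding in_cycle_iff_periodic funpow_scalar_mult_eq_iff[OF assms] ..

lemma infinite_positive_multiples:
  fixes x :: "int ^ 'n"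
  assumes "x \<noteq> 0"
  shows "infinite ((\<lambda>c. c *s x) ` {0<..})"
  using finite_imageD inj_scalar_mult_right[OF assms] infinite_Ioi
  by (metis inj_on_subset top_greatest)

lemma additive_infinite_cycles_len:
  fixes f :: "int ^ 'n \<Rightarrow> int ^ 'n"
  assumes "Modules.additive f" "C \<in> cycles_len f k" "C \<noteq> {0}"
  shows "infinite (cycles_len f k)"
proof -
  obtain a where C: "C = {(f ^^ j) a | j. j < k}" and a: "in_cycle_len f k a"
    using assms(2) unfolding cycles_len_def by blast
  have "a \<noteq> 0"
  proof
    assume "a = 0"
    then have "C = {0}"
      using a additive.zero[OF additive_funpow[OF assms(1)]]
      by (auto simp: C in_cycle_len_def intro!: exI[of _ 0])
    with assms(3) show False ..
  qed
  moreover have "(\<lambda>c. c *s a) ` {0<..} \<subseteq> {x. in_cycle_len f k x}"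
    using a in_cycle_len_scalar_mult_iff[OF assms(1)] by auto
  ultimately show ?thesis
    using infinite_positive_multiples infinite_cycles_len infinite_super by metis
qed

definition coord_gcd :: "int ^ 'n \<Rightarrow> int" where
  "coord_gcd x = Gcd (range (\<lambda>i. x $ i))"

lemma coord_gcd_nonneg: "coord_gcd x \<ge> 0"
  unfolding coord_gcd_def by simp

lemma coord_gcd_eq_0_iff: "coord_gcd x = 0 \<longleftrightarrow> x = 0"
  unfolding coord_gcd_def by (auto simp: vec_eq_iff)

lemma coord_gcd_scalar_mult: "coord_gcd (c *s x) = \<bar>c\<bar> * coord_gcd x"
proof -
  have "range (\<lambda>i. (c *s x) $ i) = (*) c ` range (\<lambda>i. x $ i)" by auto
  then show ?thesis
    unfolding coord_gcd_def using Gcd_mult[of c "range (\<lambda>i. x $ i)"] by (simp add: abs_mult)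
qed

lemma additive_coord_gcd_dvd:
  fixes f :: "int ^ 'n \<Rightarrow> int ^ 'm"
  assumes "Modules.additive f"
  shows "coord_gcd x dvd coord_gcd (f x)"
proof -
  define y where "y = (\<chi> i. x $ i div coord_gcd x)"
  have "x = coord_gcd x *s y"
    unfolding y_def coord_gcd_def by (simp add: vec_eq_iff)
  then have "f x = coord_gcd x *s f y"
    using additive_scalar_mult[OF assms] by metis
  then show ?thesis by (simp add: coord_gcd_scalar_mult coord_gcd_nonneg)
qed

lemma is_aut_coord_gcd:
  assumes "is_aut f"
  shows "coord_gcd (f x) = coord_gcd x"
proof -
  have "bij f" "Modules.additive f" "Modules.additive (inv f)"
    using assms is_aut_inv by (auto simp: is_aut_iff_bij_additive)
  then have "coord_gcd x dvd coord_gcd (f x)" "coord_gcd (f x) dvd coord_gcd (inv f (f x))"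
    using additive_coord_gcd_dvd by blast+
  then show ?thesis
    using \<open>bij f\<close> by (simp add: bij_is_inj coord_gcd_nonneg zdvd_antisym_nonneg)
qed

lemma coord_gcd_chain_through:
  assumes "is_aut f" "y \<in> chain_through f x"
  shows "coord_gcd y = coord_gcd x"
  using assms(2) unfolding chain_through_def
  by (auto simp: is_aut_coord_gcd[OF is_aut_funpow[OF assms(1)]]
      is_aut_coord_gcd[OF is_aut_funpow[OF is_aut_inv[OF assms(1)]]])

lemma self_mem_chain_through: "x \<in> chain_through f x"
proof -
  have "x = (f ^^ 0) x" by simp
  then show ?thesis unfolding chain_through_def by blast
qed

lemma is_aut_infinite_chains:
  fixes f :: "int ^ 'n \<Rightarrow> int ^ 'n"
  assumes "is_aut f" "chains f \<noteq> {}"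
  shows "infinite (chains f)"
proof -
  obtain a where a: "\<not> in_cycle f a"
    using assms(2) unfolding chains_def by blast
  have add: "Modules.additive f" using assms(1) by (simp add: is_aut_iff_bij_additive)
  have "(f ^^ 1) 0 = 0" using additive.zero[OF add] by simp
  then have "in_cycle f 0" unfolding in_cycle_iff_periodic using zero_less_one by blast
  with a have "a \<noteq> 0" by blast
  then have gcd_a: "coord_gcd a > 0"
    using coord_gcd_nonneg coord_gcd_eq_0_iff by (metis order_le_less)
  let ?chain = "\<lambda>c. chain_through f (c *s a)"
  have "inj_on ?chain {0<..}"
  proof
    fix c d :: int assume "c \<in> {0<..}" "d \<in> {0<..}" "?chain c = ?chain d"
    then have "c *s a \<in> ?chain d"
      using self_mem_chain_through[of "c *s a" f] by simp
    then have "coord_gcd (c *s a) = coord_gcd (d *s a)"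
      by (rule coord_gcd_chain_through[OF assms(1)])
    then show "c = d"
      using \<open>c \<in> {0<..}\<close> \<open>d \<in> {0<..}\<close> gcd_a by (simp add: coord_gcd_scalar_mult)
  qed
  moreover have "?chain ` {0<..} \<subseteq> chains f"
  proof (rule image_subsetI)
    fix c :: int assume "c \<in> {0<..}"
    then show "?chain c \<in> chains f"
      using a in_cycle_scalar_mult_iff[OF add, of c a] unfolding chains_def by auto
  qed
  ultimately show ?thesis
    using infinite_Ioi finite_imageD infinite_super by metis
qed

lemma additive_fixes_if_fixes_axes:
  fixes g :: "int ^ 'n \<Rightarrow> int ^ 'n"
  assumes "Modules.additive g" "\<And>i. g (axis i 1) = axis i 1"
  shows "g x = x"
proof -
  have "g x = g (\<Sum>i\<in>UNIV. x $ i *s axis i 1)" by (simp add: basis_expansion)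
  also have "\<dots> = (\<Sum>i\<in>UNIV. x $ i *s g (axis i 1))"
    by (simp add: additive.sum[OF assms(1)] additive_scalar_mult[OF assms(1)])
  also have "\<dots> = x" by (simp add: assms(2) basis_expansion)
  finally show ?thesis .
qed

lemma additive_in_cycle_if_axes_in_cycle:
  fixes f :: "int ^ 'n \<Rightarrow> int ^ 'n"
  assumes "Modules.additive f" "\<And>i. in_cycle f (axis i 1)"
  shows "in_cycle f x"
proof -
  obtain K where K: "K > 0" and fixes_axes: "\<And>i. (f ^^ K) (axis i 1) = axis i 1"
    using common_period[of UNIV f "\<lambda>i. axis i 1"] assms(2) by auto
  have "(f ^^ K) x = x"
    by (rule additive_fixes_if_fixes_axes[OF additive_funpow[OF assms(1)] fixes_axes])
  with K show ?thesis unfolding in_cycle_iff_periodic by blast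
qed

theorem proposition3p1:
  fixes f :: "int ^ 'n \<Rightarrow> int ^ 'n"
  assumes "is_aut f"
  shows "(\<forall>k. (\<exists>C \<in> cycles_len f k. C \<noteq> {0}) \<longrightarrow> infinite (cycles_len f k))
    \<and> (chains f \<noteq> {} \<longrightarrow> infinite (chains f))
    \<and> ((\<forall>i. in_cycle f (axis i 1)) \<longrightarrow> (\<forall>x. in_cycle f x))"
proof -
  have add: "Modules.additive f" using assms by (simp add: is_aut_iff_bij_additive)
  have "infinite (cycles_len f k)" if "\<exists>C \<in> cycles_len f k. C \<noteq> {0}" for k
    using that additive_infinite_cycles_len[OF add] by blast
  moreover have "chains f \<noteq> {} \<longrightarrow> infinite (chains f)"
    using is_aut_infinite_chains[OF assms] by blast
  moreover have "in_cycle f x" if "\<forall>i. in_cycle f (axis i 1)" for x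
    using that additive_in_cycle_if_axes_in_cycle[OF add] by blast
  ultimately show ?thesis by auto
qed

end
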